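(* Let $\varphi(x)=a_nx^n+\cdots+a_1x+a_0\in\mathbb{C}[x]$ with $a_n\neq0$ have $n$ distinct roots $x_1,\dots,x_n$, and let $h(x)\in R$. Let $h_*(x)=c_{n-1}x^{n-1}+\cdots+c_1x+c_0$ be the unique polynomial of degree less than $n$ in the coset $\overline{h(x)}\in R/(\varphi(x))$, and let $r(x)=b_{n-1}x^{n-1}+\cdots+b_1x+b_0$ be the unique polynomial of degree less than $n$ in the coset $\overline{\varphi'(x)h(x)}\in R/(\varphi(x))$. Define numbers $b_{j,k}$ ($j=-1,0,\dots,n-1$, $k=0,\dots,n-1$) by $b_{-1,k}=0$, $$b_{n-i,0}=(n-(i-1))\,a_{n-(i-1)},\qquad i=1,\dots,n,$$ $$b_{n-i,k}=-\frac{a_{n-i}}{a_n}\,b_{n-1,k-1}+b_{n-(i+1),k-1},\qquad i=1,\dots,n,\ k=1,\dots,n-1.$$ Then $$b_{n-i}=c_{n-1}b_{n-i,n-1}+\cdots+c_1b_{n-i,1}+c_0b_{n-i,0},\qquad i=1,\dots,n.$$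
   Context: $R\subset\mathbb{C}(x)$ denotes the subring of rational functions $p(x)/q(x)$ with $p,q\in\mathbb{C}[x]$ and $q(x_i)\neq0$ for every root $x_i$ of $\varphi$. $(\varphi(x))$ is the ideal of $R$ generated by $\varphi$, and cosets in $R/(\varphi(x))$ are denoted by an overbar. Every coset of $R/(\varphi(x))$ contains a unique polynomial of degree less than $n$, and members of the same coset take the same values at the roots of $\varphi$. *)

theory Defs
  imports "HOL-Computational_Algebra.Polynomial" "HOL-Computational_Algebra.Fraction_Field"
begin

definition ratR :: "complex poly \<Rightarrow> complex poly fract set" where
  "ratR \<phi> = {Fract p q | p q. q \<noteq> 0 \<and> (\<forall>x. poly \<phi> x = 0 \<longrightarrow> poly q x \<noteq> 0)}"

definition phi_ideal :: "complex poly \<Rightarrow> complex poly fract set" where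
  "phi_ideal \<phi> = {Fract \<phi> 1 * g | g. g \<in> ratR \<phi>}"

definition same_coset :: "complex poly \<Rightarrow> complex poly fract \<Rightarrow> complex poly fract \<Rightarrow> bool" where
  "same_coset \<phi> f g \<longleftrightarrow> f - g \<in> phi_ideal \<phi>"

text \<open>The numbers b_{j,k}, j = -1,...,n-1 (as an int), k a nat; n = degree phi,
  a_i = coeff phi i.\<close>
fun bjk :: "complex poly \<Rightarrow> int \<Rightarrow> nat \<Rightarrow> complex" where
  "bjk \<phi> j 0 = (if j < 0 then 0 else of_int (j + 1) * coeff \<phi> (nat (j + 1)))"
| "bjk \<phi> j (Suc k) = (if j < 0 then 0 else
      - (coeff \<phi> (nat j) / lead_coeff \<phi>) * bjk \<phi> (int (degree \<phi>) - 1) k + bjk \<phi> (j - 1) k)"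

end

theory Submission
  imports Defs
begin

text \<open>With \<open>n = degree \<phi>\<close>, the numbers \<open>b\<^sub>j\<^sub>,\<^sub>k\<close> are the coefficients of \<open>\<phi>' x\<^sup>k mod \<phi>\<close>:
  multiplying a remainder by \<open>x\<close> and reducing modulo \<open>\<phi>\<close> once more is exactly their recursion.
  Since \<open>\<phi>\<close> has \<open>n\<close> distinct roots, a polynomial of degree \<open>< n\<close> is determined by its values
  there, and the coset conditions make \<open>r\<close> agree with \<open>\<phi>' h\<^sub>*\<close> at the roots. Hence
  \<open>r = \<phi>' h\<^sub>* mod \<phi> = \<Sum>\<^sub>k c\<^sub>k (\<phi>' x\<^sup>k mod \<phi>)\<close>.\<close>

lemma bjk_neg: "j < 0 \<Longrightarrow> bjk \<phi> j k = 0"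
  by (cases k) auto

lemma coeff_pderiv_monom_mod:
  assumes "degree \<phi> > 0" "j < degree \<phi>"
  shows "coeff (pderiv \<phi> * monom 1 k mod \<phi>) j = bjk \<phi> (int j) k"
  using assms(2)
proof (induction k arbitrary: j)
  case 0
  have "pderiv \<phi> mod \<phi> = pderiv \<phi>"
    using assms(1) by (intro mod_poly_less) (simp add: degree_pderiv)
  then show ?case by (simp add: coeff_pderiv nat_add_distrib)
next
  case (Suc k)
  let ?n = "degree \<phi>"
  let ?Q = "pderiv \<phi> * monom 1 k mod \<phi>"
  define b where "b = coeff (pCons 0 ?Q) ?n / lead_coeff \<phi>"
  have b: "b = bjk \<phi> (int ?n - 1) k / lead_coeff \<phi>"
  proof -
    obtain m where "?n = Suc m" using assms(1) by (cases ?n) auto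
    then show ?thesis unfolding b_def using Suc.IH[of m] by simp
  qed
  have "pderiv \<phi> * monom 1 (Suc k) = pCons 0 (pderiv \<phi> * monom 1 k)"
    by (simp only: monom_Suc mult_pCons_right smult_0_left add_0_left)
  then have "pderiv \<phi> * monom 1 (Suc k) mod \<phi> = pCons 0 ?Q - smult b \<phi>"
    unfolding b_def by (simp only:) (rule mod_pCons, use assms(1) in auto)
  then have coeff_eq: "coeff (pderiv \<phi> * monom 1 (Suc k) mod \<phi>) j
      = coeff (pCons 0 ?Q) j - b * coeff \<phi> j"
    by simp
  show ?case
  proof (cases j)
    case 0
    then show ?thesis unfolding coeff_eq b by (simp add: bjk_neg)
  next
    case (Suc j')
    then have "coeff ?Q j' = bjk \<phi> (int j - 1) k"
      using Suc.IH[of j'] Suc.prems by simp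
    then show ?thesis unfolding coeff_eq b using Suc by (simp add: nat_add_distrib)
  qed
qed

lemma coeff_pderiv_mult_mod:
  assumes "degree \<phi> > 0" "j < degree \<phi>" "degree p < m"
  shows "coeff (pderiv \<phi> * p mod \<phi>) j = (\<Sum>k<m. coeff p k * bjk \<phi> (int j) k)"
proof -
  have mod_sum: "(\<Sum>k\<in>A. f k) mod \<phi> = (\<Sum>k\<in>A. f k mod \<phi>)" for A and f :: "nat \<Rightarrow> complex poly"
    by (induction A rule: infinite_finite_induct) (simp_all add: poly_mod_add_left)
  have "p = (\<Sum>k\<le>m - 1. monom (coeff p k) k)"
    using assms(3) by (intro poly_as_sum_of_monoms' [symmetric]) simp
  also have "{..m - 1} = {..<m}" using assms(3) by auto
  finally have p_sum: "p = (\<Sum>k<m. monom (coeff p k) k)" .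
  have "pderiv \<phi> * p = (\<Sum>k<m. smult (coeff p k) (pderiv \<phi> * monom 1 k))"
    by (subst p_sum) (simp add: sum_distrib_left smult_monom flip: mult_smult_right)
  then have "pderiv \<phi> * p mod \<phi> = (\<Sum>k<m. smult (coeff p k) (pderiv \<phi> * monom 1 k mod \<phi>))"
    by (simp add: mod_sum mod_smult_left)
  then show ?thesis
    using coeff_pderiv_monom_mod[OF assms(1,2)] by (simp add: coeff_sum)
qed

lemma same_coset_poly_eq:
  assumes "same_coset \<phi> (Fract p 1) (Fract c d)" "d \<noteq> 0" "poly \<phi> x = 0" "poly d x \<noteq> 0"
  shows "poly p x * poly d x = poly c x"
proof -
  obtain a b where ab: "Fract p 1 - Fract c d = Fract \<phi> 1 * Fract a b" "b \<noteq> 0"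
      "poly b x \<noteq> 0"
    using assms(1,3) unfolding same_coset_def phi_ideal_def ratR_def by blast
  then have "(p * d - c) * b = \<phi> * a * d"
    using assms(2) by (simp add: eq_fract)
  then have "poly ((p * d - c) * b) x = poly (\<phi> * a * d) x" by simp
  then have "(poly p x * poly d x - poly c x) * poly b x = 0"
    using assms(3) by simp
  then show ?thesis using ab(3) by simp
qed

lemma eq_mod_if_eq_on_roots:
  assumes "card {x. poly \<phi> x = 0} = degree \<phi>" "degree r < degree \<phi>"
    and "\<And>x. poly \<phi> x = 0 \<Longrightarrow> poly r x = poly p x"
  shows "r = p mod \<phi>"
proof (rule poly_eqI_degree[of "{x. poly \<phi> x = 0}"])
  show "degree (p mod \<phi>) < card {x. poly \<phi> x = 0}"
    using assms(1,2) degree_mod_less[of \<phi> p] by (cases "\<phi> = 0") auto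
qed (use assms in \<open>simp_all add: poly_mod\<close>)

theorem proposition1:
  fixes \<phi> hs r :: "complex poly" and h :: "complex poly fract"
  defines "n \<equiv> degree \<phi>"
  assumes "\<phi> \<noteq> 0"
    and "card {x. poly \<phi> x = 0} = n"
    and "h \<in> ratR \<phi>"
    and "degree hs < n" and "same_coset \<phi> (Fract hs 1) h"
    and "degree r < n" and "same_coset \<phi> (Fract r 1) (Fract (pderiv \<phi>) 1 * h)"
  shows "\<forall>i\<in>{1..n}. coeff r (n - i) = (\<Sum>k<n. coeff hs k * bjk \<phi> (int n - int i) k)"
proof -
  obtain c d where h: "h = Fract c d" "d \<noteq> 0" "\<And>x. poly \<phi> x = 0 \<Longrightarrow> poly d x \<noteq> 0"
    using assms(4) unfolding ratR_def by blast
  have "poly r x = poly (pderiv \<phi> * hs) x" if "poly \<phi> x = 0" for x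
  proof -
    have "poly hs x * poly d x = poly c x"
      using same_coset_poly_eq assms(6) h that by simp
    moreover have "poly r x * poly d x = poly (pderiv \<phi> * c) x"
      using same_coset_poly_eq[of \<phi> r "pderiv \<phi> * c" d] assms(8) h that by simp
    ultimately have "poly r x * poly d x = poly (pderiv \<phi> * hs) x * poly d x"
      by (simp add: mult.assoc)
    then show ?thesis using h(3)[OF that] by simp
  qed
  then have "r = pderiv \<phi> * hs mod \<phi>"
    using eq_mod_if_eq_on_roots assms(3,7) unfolding n_def by blast
  moreover have "n > 0" using assms(5) by simp
  ultimately show ?thesis
    using coeff_pderiv_mult_mod[of \<phi> _ hs n] assms(5) unfolding n_def by (auto simp: of_nat_diff)
qed

end
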